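(* In the two-party one-way communication (Holevo–Frenkel–Weiner) scenario, classical shared randomness can increase the utility of a perfect one-bit classical channel: there exist finite sets $\mathcal{X},\mathcal{B}$ and a payoff function $\beta$ on correlations $P(\mathcal{B}|\mathcal{X})$ such that $\sup_{P\in\mathcal{C}_{\mathrm{SR}}}\beta(P)>\sup_{P\in\mathcal{C}}\beta(P)$.
   Context: Scenario: Alice receives an input $x$ from a finite set $\mathcal{X}$, Bob must output $b$ from a finite set $\mathcal{B}$; a correlation is a conditional distribution $P=(P(b|x))_{x\in\mathcal{X},b\in\mathcal{B}}$, and a task is a payoff function $\beta$ assigning a real number to each correlation. The utility of a resource for a task $\beta$ is $\sup\beta(P)$ over all correlations $P$ achievable with that resource. $\mathcal{C}$ (one bit of classical communication, no shared randomness, local randomness allowed): the set of correlations of the form $P(b|x)=\sum_{m\in\{0,1\}}E(m|x)D(b|m)$, where $E(\cdot|x)$ is a probability distribution on $\{0,1\}$ for each $x$ and $D(\cdot|m)$ is a probability distribution on $\mathcal{B}$ for each $m$. $\mathcal{C}_{\mathrm{SR}}$ (one bit of classical communication assisted by an arbitrary finite amount of classical shared randomness): the set of all finite convex combinations $\sum_{\lambda}q_\lambda P_\lambda$ with $q_\lambda\ge0$, $\sum_\lambda q_\lambda=1$, and each $P_\lambda\in\mathcal{C}$. *)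

theory Defs
  imports Main "HOL-Library.Extended_Real"
begin

text \<open>Correlations P(b|x) are represented as functions  nat \<Rightarrow> nat \<Rightarrow> real  on
  finite input set X and output set B (P x b = P(b|x)), vanishing outside X \<times> B.\<close>

definition is_distr :: "'a set \<Rightarrow> ('a \<Rightarrow> real) \<Rightarrow> bool" where
  "is_distr S p \<longleftrightarrow> (\<forall>s\<in>S. p s \<ge> 0) \<and> (\<Sum>s\<in>S. p s) = 1"

definition one_bit_corr :: "nat set \<Rightarrow> nat set \<Rightarrow> (nat \<Rightarrow> nat \<Rightarrow> real) set" where
  "one_bit_corr X B = {P. \<exists>(E :: nat \<Rightarrow> bool \<Rightarrow> real) (D :: bool \<Rightarrow> nat \<Rightarrow> real).
      (\<forall>x\<in>X. is_distr (UNIV :: bool set) (E x)) \<and> (\<forall>m. is_distr B (D m)) \<and>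
      P = (\<lambda>x b. if x \<in> X \<and> b \<in> B then (\<Sum>m\<in>(UNIV :: bool set). E x m * D m b) else 0)}"

definition one_bit_SR_corr :: "nat set \<Rightarrow> nat set \<Rightarrow> (nat \<Rightarrow> nat \<Rightarrow> real) set" where
  "one_bit_SR_corr X B = {P. \<exists>(n::nat) (q :: nat \<Rightarrow> real) Ps.
      (\<forall>i<n. q i \<ge> 0 \<and> Ps i \<in> one_bit_corr X B) \<and> (\<Sum>i<n. q i) = 1 \<and>
      P = (\<lambda>x b. \<Sum>i<n. q i * Ps i x b)}"

definition utility :: "((nat \<Rightarrow> nat \<Rightarrow> real) \<Rightarrow> real) \<Rightarrow> (nat \<Rightarrow> nat \<Rightarrow> real) set \<Rightarrow> ereal" where
  "utility \<beta> R = (SUP P\<in>R. ereal (\<beta> P))"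

end

theory Submission
  imports Defs
begin

text \<open>With one bit and no shared randomness every row \<open>P(\<cdot>|x)\<close> is a convex combination of the
  two decoder distributions \<open>D(\<cdot>|0)\<close> and \<open>D(\<cdot>|1)\<close>, so all rows lie on one line.  The equal
  mixture of two deterministic one-bit strategies has the three non-collinear rows
  \<open>\<delta>\<^sub>0\<close>, \<open>(\<delta>\<^sub>0 + \<delta>\<^sub>1)/2\<close>, \<open>(\<delta>\<^sub>1 + \<delta>\<^sub>2)/2\<close>, so it lies in \<open>\<C>\<^sub>S\<^sub>R\<close> but not in \<open>\<C>\<close>; the payoff
  that rewards exactly this correlation separates the two utilities.\<close>

lemma one_bit_corr_rows_collinear:
  assumes "P \<in> one_bit_corr X B" and "x \<in> X" "y \<in> X" "z \<in> X" and "b \<in> B" "c \<in> B"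
  shows "(P y b - P x b) * (P z c - P x c) = (P y c - P x c) * (P z b - P x b)"
proof -
  obtain E D where E: "\<forall>x\<in>X. is_distr (UNIV :: bool set) (E x)"
    and P: "P = (\<lambda>x b. if x \<in> X \<and> b \<in> B then (\<Sum>m\<in>(UNIV :: bool set). E x m * D m b) else 0)"
    using assms(1) unfolding one_bit_corr_def by blast
  have row: "P w d = D False d + E w True * (D True d - D False d)" if "w \<in> X" "d \<in> B" for w d
  proof -
    have E_False: "E w False = 1 - E w True"
      using E that(1) by (auto simp: is_distr_def UNIV_bool)
    show ?thesis
      using that by (simp add: P UNIV_bool E_False algebra_simps)
  qed
  show ?thesis
    using assms(2-6) by (simp add: row algebra_simps)
qed

definition det_corr :: "nat set \<Rightarrow> nat set \<Rightarrow> (nat \<Rightarrow> bool) \<Rightarrow> (bool \<Rightarrow> nat) \<Rightarrow> nat \<Rightarrow> nat \<Rightarrow> real" where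
  "det_corr X B f g x b = (if x \<in> X \<and> b \<in> B \<and> g (f x) = b then 1 else 0)"

lemma det_corr_in_one_bit_corr:
  assumes "finite B" and "range g \<subseteq> B"
  shows "det_corr X B f g \<in> one_bit_corr X B"
  unfolding one_bit_corr_def
proof (intro CollectI exI conjI ballI allI)
  let ?E = "\<lambda>x m. if f x = m then 1 else 0 :: real"
  let ?D = "\<lambda>m b. if g m = b then 1 else 0 :: real"
  show "is_distr UNIV (?E x)" for x
    by (simp add: is_distr_def UNIV_bool)
  show "is_distr B (?D m)" for m
    using assms by (auto simp: is_distr_def)
  show "det_corr X B f g = (\<lambda>x b. if x \<in> X \<and> b \<in> B then \<Sum>m\<in>UNIV. ?E x m * ?D m b else 0)"
    by (auto simp: fun_eq_iff det_corr_def UNIV_bool)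
qed

lemma one_bit_SR_corr_mix:
  assumes "P \<in> one_bit_corr X B" "Q \<in> one_bit_corr X B" and "0 \<le> t" "t \<le> 1"
  shows "(\<lambda>x b. t * P x b + (1 - t) * Q x b) \<in> one_bit_SR_corr X B"
  unfolding one_bit_SR_corr_def
proof (intro CollectI exI conjI)
  let ?q = "\<lambda>i::nat. if i = 0 then t else 1 - t"
  let ?Ps = "\<lambda>i::nat. if i = 0 then P else Q"
  show "\<forall>i<2. 0 \<le> ?q i \<and> ?Ps i \<in> one_bit_corr X B"
    using assms by auto
  show "(\<Sum>i<2. ?q i) = 1"
    by (simp add: numeral_2_eq_2)
  show "(\<lambda>x b. t * P x b + (1 - t) * Q x b) = (\<lambda>x b. \<Sum>i<2. ?q i * ?Ps i x b)"
    by (simp add: numeral_2_eq_2)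
qed

lemma utility_indicator_less:
  assumes "P \<in> R'" and "P \<notin> R"
  shows "utility (\<lambda>Q. if Q = P then 1 else 0) R < utility (\<lambda>Q. if Q = P then 1 else 0) R'"
proof -
  have "utility (\<lambda>Q. if Q = P then 1 else 0) R \<le> 0"
    unfolding utility_def using assms(2) by (intro SUP_least) auto
  also have "(0::ereal) < 1"
    by simp
  also have "1 \<le> utility (\<lambda>Q. if Q = P then 1 else 0) R'"
    unfolding utility_def using SUP_upper[OF assms(1), of "\<lambda>Q. ereal (if Q = P then 1 else 0)"]
    by (simp add: one_ereal_def)
  finally show ?thesis .
qed

theorem theorem1:
  shows "\<exists>(X :: nat set) (B :: nat set) (\<beta> :: (nat \<Rightarrow> nat \<Rightarrow> real) \<Rightarrow> real).
           finite X \<and> finite B \<and>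
           utility \<beta> (one_bit_SR_corr X B) > utility \<beta> (one_bit_corr X B)"
proof -
  let ?X = "{0, 1, 2 :: nat}"
  let ?S1 = "det_corr ?X ?X (\<lambda>x. x = 0) (\<lambda>m. if m then 0 else 1)"
  let ?S2 = "det_corr ?X ?X (\<lambda>x. x = 2) (\<lambda>m. if m then 2 else 0)"
  define T where "T = (\<lambda>x b. 1/2 * ?S1 x b + (1 - 1/2) * ?S2 x b)"
  have S1: "?S1 \<in> one_bit_corr ?X ?X" and S2: "?S2 \<in> one_bit_corr ?X ?X"
    by (intro det_corr_in_one_bit_corr; auto)+
  have "T \<in> one_bit_SR_corr ?X ?X"
    unfolding T_def by (rule one_bit_SR_corr_mix[OF S1 S2]) simp_all
  moreover have "T \<notin> one_bit_corr ?X ?X"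
  proof
    assume "T \<in> one_bit_corr ?X ?X"
    from one_bit_corr_rows_collinear[OF this, of 0 1 2 0 2] show False
      by (simp add: T_def det_corr_def)
  qed
  ultimately have "utility (\<lambda>Q. if Q = T then 1 else 0) (one_bit_corr ?X ?X)
      < utility (\<lambda>Q. if Q = T then 1 else 0) (one_bit_SR_corr ?X ?X)"
    by (intro utility_indicator_less)
  then show ?thesis
    by (intro exI[of _ ?X] exI[of _ "\<lambda>Q. if Q = T then 1 else 0"] conjI) simp_all
qed

end
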